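(* For every $s>0$ let $\sigma_s$ be a Borel probability measure on $\mathbb S^{N-1}$ and let $e_s\in\mathbb S^{N-1}$ be a maximum point of $M_{s,\sigma_s}$. Then $$\liminf_{s\to+\infty}\int_{\mathbb S^{N-1}}|e_s\cdot\theta|^{2s}\sigma_s(d\theta)>0\quad\Longleftrightarrow\quad\inf_{s>0}\int_{\mathbb S^{N-1}}|e_s\cdot\theta|^{2s}\sigma_s(d\theta)>0.$$
   Context: For a Borel probability measure $\sigma$ on $\mathbb S^{N-1}$, $s\ge0$ and $e\in\mathbb S^{N-1}$, $M_{s,\sigma}(e)=\int_{\mathbb S^{N-1}}|e\cdot\theta|^{2s}\sigma(d\theta)$. *)

theory Defs
  imports "HOL-Probability.Probability"
begin

definition borel_prob_on_sphere :: "'a::euclidean_space measure \<Rightarrow> bool" where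
  "borel_prob_on_sphere \<sigma> \<longleftrightarrow> prob_space \<sigma> \<and> space \<sigma> = sphere 0 1 \<and>
     sets \<sigma> = sets (restrict_space borel (sphere (0::'a) 1))"

text \<open>M_{s,sigma}(e) = integral of |e . theta|^(2s); the convention t^0 = 1 (also for t = 0) is used.\<close>
definition Mfun :: "real \<Rightarrow> 'a::euclidean_space measure \<Rightarrow> 'a \<Rightarrow> real" where
  "Mfun s \<sigma> e = (\<integral>\<theta>. (if s = 0 then 1 else \<bar>e \<bullet> \<theta>\<bar> powr (2 * s)) \<partial>\<sigma>)"

end

theory Submission
  imports Defs
begin

text \<open>On the unit sphere some coordinate satisfies |b \<bullet> \<theta>| \<ge> 1/N (N the dimension), so the values
  M(b) = \<integral> |b \<bullet> \<theta>| powr (2s) for the N basis vectors b sum to at least N powr (-2s), and one is at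
  least N powr (-2s) / N. The maximum M(e_s) thus has a lower bound that is positive and
  decreasing in s, so it stays away from 0 on every bounded range of s and only its behaviour as
  s \<rightarrow> \<infinity> matters.\<close>

lemma sphere_ex_Basis_inner_ge:
  fixes \<theta> :: "'a::euclidean_space"
  assumes "norm \<theta> = 1"
  shows "\<exists>b\<in>Basis. 1 / real DIM('a) \<le> \<bar>b \<bullet> \<theta>\<bar>"
proof (rule ccontr)
  assume "\<not> ?thesis"
  then have "(\<Sum>b\<in>Basis. \<bar>\<theta> \<bullet> b\<bar>) < (\<Sum>b\<in>(Basis::'a set). 1 / real DIM('a))"
    by (intro sum_strict_mono) (auto simp: inner_commute not_le)
  also have "\<dots> = 1" by simp
  finally show False using norm_le_l1[of \<theta>] assms by simp
qed

lemma sum_Basis_inner_powr_ge: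
  fixes \<theta> :: "'a::euclidean_space"
  assumes "norm \<theta> = 1" "p \<ge> 0"
  shows "real DIM('a) powr (-p) \<le> (\<Sum>b\<in>Basis. \<bar>b \<bullet> \<theta>\<bar> powr p)"
proof -
  obtain b where b: "b \<in> Basis" "1 / real DIM('a) \<le> \<bar>b \<bullet> \<theta>\<bar>"
    using sphere_ex_Basis_inner_ge[OF assms(1)] by blast
  have "real DIM('a) powr (-p) = (1 / real DIM('a)) powr p"
    by (simp add: powr_minus_divide powr_divide)
  also have "\<dots> \<le> \<bar>b \<bullet> \<theta>\<bar> powr p"
    using b(2) assms(2) by (intro powr_mono2) auto
  also have "\<dots> \<le> (\<Sum>b\<in>Basis. \<bar>b \<bullet> \<theta>\<bar> powr p)"
    using b(1) by (intro member_le_sum) auto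
  finally show ?thesis .
qed

lemma integrable_abs_inner_powr:
  fixes \<sigma> :: "'a::euclidean_space measure"
  assumes "borel_prob_on_sphere \<sigma>" "norm u \<le> 1" "p \<ge> 0"
  shows "integrable \<sigma> (\<lambda>\<theta>. \<bar>u \<bullet> \<theta>\<bar> powr p)"
proof -
  interpret prob_space \<sigma> using assms(1) unfolding borel_prob_on_sphere_def by auto
  have space: "space \<sigma> = sphere 0 1"
    and sets: "sets \<sigma> = sets (restrict_space borel (sphere (0::'a) 1))"
    using assms(1) unfolding borel_prob_on_sphere_def by auto
  have "(\<lambda>\<theta>. \<bar>u \<bullet> \<theta>\<bar> powr p) \<in> borel_measurable (restrict_space borel (sphere (0::'a) 1))"
    by (intro measurable_restrict_space1) measurable
  then have "(\<lambda>\<theta>. \<bar>u \<bullet> \<theta>\<bar> powr p) \<in> borel_measurable \<sigma>"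
    using measurable_cong_sets[OF sets refl] by blast
  moreover have "AE \<theta> in \<sigma>. norm (\<bar>u \<bullet> \<theta>\<bar> powr p) \<le> 1"
  proof (rule AE_I2)
    fix \<theta> assume "\<theta> \<in> space \<sigma>"
    then have "\<bar>u \<bullet> \<theta>\<bar> \<le> 1"
      using Cauchy_Schwarz_ineq2[of u \<theta>] assms(2) space mult_le_one[of "norm u" "norm \<theta>"]
      by simp
    then show "norm (\<bar>u \<bullet> \<theta>\<bar> powr p) \<le> 1"
      using assms(3) by (auto intro!: powr_le1)
  qed
  ultimately show ?thesis by (intro integrable_const_bound[where B=1])
qed

lemma ex_sphere_integral_abs_inner_powr_ge:
  fixes \<sigma> :: "'a::euclidean_space measure"
  assumes \<sigma>: "borel_prob_on_sphere \<sigma>" and p: "p \<ge> 0"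
  shows "\<exists>u\<in>sphere (0::'a) 1. real DIM('a) powr (-p) / real DIM('a) \<le> (\<integral>\<theta>. \<bar>u \<bullet> \<theta>\<bar> powr p \<partial>\<sigma>)"
proof (rule ccontr)
  let ?N = "real DIM('a)"
  interpret prob_space \<sigma> using \<sigma> unfolding borel_prob_on_sphere_def by auto
  have space: "space \<sigma> = sphere 0 1" using \<sigma> unfolding borel_prob_on_sphere_def by auto
  have int: "integrable \<sigma> (\<lambda>\<theta>. \<bar>b \<bullet> \<theta>\<bar> powr p)" if "b \<in> Basis" for b :: 'a
    using integrable_abs_inner_powr[OF \<sigma> _ p] that by simp
  assume "\<not> ?thesis"
  then have small: "(\<integral>\<theta>. \<bar>b \<bullet> \<theta>\<bar> powr p \<partial>\<sigma>) < ?N powr (-p) / ?N" if "b \<in> Basis" for b :: 'a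
    using that by (auto simp: not_le)
  have "?N powr (-p) = (\<integral>\<theta>. ?N powr (-p) \<partial>\<sigma>)" by (simp add: prob_space)
  also have "\<dots> \<le> (\<integral>\<theta>. (\<Sum>b\<in>Basis. \<bar>b \<bullet> \<theta>\<bar> powr p) \<partial>\<sigma>)"
    using int space sum_Basis_inner_powr_ge[OF _ p] by (intro integral_mono) auto
  also have "\<dots> = (\<Sum>b\<in>Basis. (\<integral>\<theta>. \<bar>b \<bullet> \<theta>\<bar> powr p \<partial>\<sigma>))"
    using int by (intro Bochner_Integration.integral_sum) auto
  also have "\<dots> < (\<Sum>b\<in>(Basis::'a set). ?N powr (-p) / ?N)"
    using small by (intro sum_strict_mono) auto
  also have "\<dots> = ?N powr (-p)" by simp
  finally show False by simp
qed

lemma Mfun_maximum_ge: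
  fixes \<sigma> :: "'a::euclidean_space measure"
  assumes "borel_prob_on_sphere \<sigma>" "s > 0"
    and max: "\<And>u. u \<in> sphere 0 1 \<Longrightarrow> Mfun s \<sigma> u \<le> Mfun s \<sigma> e"
  shows "real DIM('a) powr (-2 * s) / real DIM('a) \<le> (\<integral>\<theta>. \<bar>e \<bullet> \<theta>\<bar> powr (2 * s) \<partial>\<sigma>)"
proof -
  have Mfun: "Mfun s \<sigma> v = (\<integral>\<theta>. \<bar>v \<bullet> \<theta>\<bar> powr (2 * s) \<partial>\<sigma>)" for v :: 'a
    using \<open>s > 0\<close> by (simp add: Mfun_def)
  obtain u where "u \<in> sphere 0 1"
    "real DIM('a) powr (-(2 * s)) / real DIM('a) \<le> (\<integral>\<theta>. \<bar>u \<bullet> \<theta>\<bar> powr (2 * s) \<partial>\<sigma>)"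
    using ex_sphere_integral_abs_inner_powr_ge[OF assms(1), of "2 * s"] \<open>s > 0\<close> by auto
  then show ?thesis using max[of u] unfolding Mfun by simp
qed

lemma Liminf_at_top_pos_iff_INF_pos:
  fixes f :: "real \<Rightarrow> real"
  assumes bounded_below: "\<And>S. \<exists>c>0. \<forall>s\<in>{0<..S}. c \<le> f s"
  shows "Liminf at_top (\<lambda>s. ereal (f s)) > 0 \<longleftrightarrow> (INF s\<in>{0<..}. ereal (f s)) > 0"
proof
  assume "Liminf at_top (\<lambda>s. ereal (f s)) > 0"
  then obtain c where c: "0 < ereal c" "ereal c < Liminf at_top (\<lambda>s. ereal (f s))"
    using ereal_dense2 by blast
  then have "eventually (\<lambda>s. c < f s) at_top" using less_LiminfD by fastforce
  then obtain S where S: "\<And>s. s \<ge> S \<Longrightarrow> c < f s"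
    unfolding eventually_at_top_linorder by auto
  obtain c' where c': "c' > 0" "\<And>s. s \<in> {0<..S} \<Longrightarrow> c' \<le> f s"
    using bounded_below by blast
  define d where "d = min c c'"
  have "ereal d \<le> (INF s\<in>{0<..}. ereal (f s))"
  proof (rule INF_greatest)
    fix s :: real assume "s \<in> {0<..}"
    then have "d \<le> f s"
      using S[of s] c'(2)[of s] unfolding d_def by (cases "s \<ge> S") auto
    then show "ereal d \<le> ereal (f s)" by simp
  qed
  moreover have "0 < ereal d" using c(1) c'(1) unfolding d_def by simp
  ultimately show "(INF s\<in>{0<..}. ereal (f s)) > 0" by order
next
  assume pos: "(INF s\<in>{0<..}. ereal (f s)) > 0"
  have "eventually (\<lambda>s. (INF s\<in>{0<..}. ereal (f s)) \<le> ereal (f s)) at_top"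
    using eventually_gt_at_top[of "0::real"] by eventually_elim (rule INF_lower, simp)
  then have "(INF s\<in>{0<..}. ereal (f s)) \<le> Liminf at_top (\<lambda>s. ereal (f s))"
    by (rule Liminf_bounded)
  then show "Liminf at_top (\<lambda>s. ereal (f s)) > 0" using pos by order
qed

theorem lemma2p2:
  fixes \<sigma> :: "real \<Rightarrow> 'a::euclidean_space measure" and e :: "real \<Rightarrow> 'a"
  assumes meas: "\<And>s. s > 0 \<Longrightarrow> borel_prob_on_sphere (\<sigma> s)"
    and e_sph: "\<And>s. s > 0 \<Longrightarrow> e s \<in> sphere 0 1"
    and e_max: "\<And>s u. s > 0 \<Longrightarrow> u \<in> sphere 0 1 \<Longrightarrow> Mfun s (\<sigma> s) u \<le> Mfun s (\<sigma> s) (e s)"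
  shows "Liminf at_top (\<lambda>s. ereal (\<integral>\<theta>. \<bar>e s \<bullet> \<theta>\<bar> powr (2 * s) \<partial>\<sigma> s)) > 0
     \<longleftrightarrow> (INF s\<in>{0<..}. ereal (\<integral>\<theta>. \<bar>e s \<bullet> \<theta>\<bar> powr (2 * s) \<partial>\<sigma> s)) > 0"
proof (rule Liminf_at_top_pos_iff_INF_pos)
  let ?N = "real DIM('a)"
  fix S :: real
  have "?N powr (-2 * S) / ?N \<le> (\<integral>\<theta>. \<bar>e s \<bullet> \<theta>\<bar> powr (2 * s) \<partial>\<sigma> s)" if "s \<in> {0<..S}" for s
  proof -
    have "?N powr (-2 * S) \<le> ?N powr (-2 * s)"
      using that by (intro powr_mono) auto
    then have "?N powr (-2 * S) / ?N \<le> ?N powr (-2 * s) / ?N"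
      by (simp add: divide_right_mono)
    also have "\<dots> \<le> (\<integral>\<theta>. \<bar>e s \<bullet> \<theta>\<bar> powr (2 * s) \<partial>\<sigma> s)"
      using that by (intro Mfun_maximum_ge meas e_max) auto
    finally show ?thesis .
  qed
  then show "\<exists>c>0. \<forall>s\<in>{0<..S}. c \<le> (\<integral>\<theta>. \<bar>e s \<bullet> \<theta>\<bar> powr (2 * s) \<partial>\<sigma> s)"
    by (intro exI[of _ "?N powr (-2 * S) / ?N"]) auto
qed

end
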